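(* Let $U$ be a finite nonempty set, $R$ an equivalence relation on $U$, and $M(R)$ the support matroid induced by $R$. Then the family $\mathbf{B}(R)$ of bases of $M(R)$ is $$\mathbf{B}(R)=\{X\subseteq U\mid \forall x\in U,\ |RN(x)\cap X|=1\}.$$
   Context: For $x\in U$, $RN(x)=\{y\in U\mid xRy\}$; $R^{*}(X)=\{x\in U\mid RN(x)\cap X\neq\emptyset\}$. Let $\mathbf{S}(R)=\{X\subseteq U\mid R^{*}(X)=U\}$. The support matroid $M(R)=(U,\mathbf{I}(R))$ is the matroid on $U$ whose independent sets $\mathbf{I}(R)$ are the subsets of inclusion-minimal members of $\mathbf{S}(R)$; it is a matroid whose support sets (subsets of $U$ containing a base) are exactly the members of $\mathbf{S}(R)$. A base of a matroid is an inclusion-maximal independent set. *)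

theory Defs
  imports Main
begin

definition RN :: "('a \<times> 'a) set \<Rightarrow> 'a \<Rightarrow> 'a set" where
  "RN R x = {y. (x, y) \<in> R}"

definition upper_approx :: "'a set \<Rightarrow> ('a \<times> 'a) set \<Rightarrow> 'a set \<Rightarrow> 'a set" where
  "upper_approx U R X = {x \<in> U. RN R x \<inter> X \<noteq> {}}"

definition supp_sets :: "'a set \<Rightarrow> ('a \<times> 'a) set \<Rightarrow> 'a set set" where
  "supp_sets U R = {X. X \<subseteq> U \<and> upper_approx U R X = U}"

definition minimal_supp_sets :: "'a set \<Rightarrow> ('a \<times> 'a) set \<Rightarrow> 'a set set" where
  "minimal_supp_sets U R =
     {X \<in> supp_sets U R. \<forall>Y \<in> supp_sets U R. Y \<subseteq> X \<longrightarrow> Y = X}"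

text \<open>Independent sets of the support matroid M(R): subsets of minimal members of S(R).\<close>
definition supp_indep :: "'a set \<Rightarrow> ('a \<times> 'a) set \<Rightarrow> 'a set set" where
  "supp_indep U R = {I. \<exists>X \<in> minimal_supp_sets U R. I \<subseteq> X}"

definition supp_bases :: "'a set \<Rightarrow> ('a \<times> 'a) set \<Rightarrow> 'a set set" where
  "supp_bases U R =
     {B \<in> supp_indep U R. \<forall>I \<in> supp_indep U R. B \<subseteq> I \<longrightarrow> I = B}"

end

theory Submission
  imports Defs
begin

text \<open>Minimal members of a family are pairwise incomparable, so every independent set lies in
  a unique minimal support set and the bases are exactly the minimal support sets. For an
  equivalence relation, RN R x is the class of x; a support set meets every class,
  and it is minimal iff it meets every class exactly once, since a second point b in some
  class can be removed: every class that met the set only in b is that same class.\<close>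

lemma supp_bases_eq_minimal_supp_sets: "supp_bases U R = minimal_supp_sets U R"
proof -
  have minimal_eq: "X = Y" if "X \<in> minimal_supp_sets U R" "Y \<in> minimal_supp_sets U R" "X \<subseteq> Y"
    for X Y
    using that unfolding minimal_supp_sets_def by blast
  have "B \<in> supp_bases U R \<longleftrightarrow> B \<in> minimal_supp_sets U R" for B
  proof
    assume B: "B \<in> supp_bases U R"
    then obtain X where X: "X \<in> minimal_supp_sets U R" "B \<subseteq> X"
      unfolding supp_bases_def supp_indep_def by blast
    then have "X \<in> supp_indep U R"
      unfolding supp_indep_def by blast
    with B X show "B \<in> minimal_supp_sets U R"
      unfolding supp_bases_def by blast
  next
    assume "B \<in> minimal_supp_sets U R"
    then show "B \<in> supp_bases U R"
      unfolding supp_bases_def supp_indep_def by (blast dest: minimal_eq)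
  qed
  then show ?thesis by blast
qed

lemma mem_supp_sets_iff:
  "X \<in> supp_sets U R \<longleftrightarrow> X \<subseteq> U \<and> (\<forall>x \<in> U. RN R x \<inter> X \<noteq> {})"
  unfolding supp_sets_def upper_approx_def by auto

lemma RN_eq_Image: "RN R x = R `` {x}"
  unfolding RN_def by auto

lemma RN_eq_if_mem:
  assumes "equiv U R" and "y \<in> RN R x"
  shows "RN R y = RN R x"
  using equiv_class_eq[OF assms(1)] assms(2) by (simp add: RN_eq_Image)

lemma self_mem_RN:
  assumes "equiv U R" and "x \<in> U"
  shows "x \<in> RN R x"
  using assms unfolding RN_def equiv_def refl_on_def by blast

lemma minimal_supp_sets_meet_RN_once:
  assumes "equiv U R" and "X \<in> minimal_supp_sets U R" and "x \<in> U"
  shows "card (RN R x \<inter> X) = 1"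
proof -
  have supp: "X \<in> supp_sets U R"
    and minimal: "\<And>Y. Y \<in> supp_sets U R \<Longrightarrow> Y \<subseteq> X \<Longrightarrow> Y = X"
    using assms(2) unfolding minimal_supp_sets_def by auto
  obtain a where a: "a \<in> RN R x \<inter> X"
    using supp assms(3) by (auto simp: mem_supp_sets_iff)
  have "b = a" if b: "b \<in> RN R x \<inter> X" for b
  proof (rule ccontr)
    assume "b \<noteq> a"
    have "RN R z \<inter> (X - {b}) \<noteq> {}" if "z \<in> U" for z
    proof -
      obtain c where c: "c \<in> RN R z \<inter> X"
        using supp \<open>z \<in> U\<close> by (auto simp: mem_supp_sets_iff)
      show ?thesis
      proof (cases "c = b")
        case True
        have "RN R z = RN R x"
          using RN_eq_if_mem[OF assms(1)] b c True by blast
        then show ?thesis using a \<open>b \<noteq> a\<close> by blast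
      qed (use c in blast)
    qed
    then have "X - {b} \<in> supp_sets U R"
      using supp by (auto simp: mem_supp_sets_iff)
    then show False using minimal b by blast
  qed
  with a have "RN R x \<inter> X = {a}" by blast
  then show ?thesis by simp
qed

lemma minimal_supp_setsI:
  assumes "equiv U R" and "X \<subseteq> U" and once: "\<forall>x \<in> U. card (RN R x \<inter> X) = 1"
  shows "X \<in> minimal_supp_sets U R"
proof -
  have supp: "X \<in> supp_sets U R"
    using assms(2) once by (auto simp: mem_supp_sets_iff)
  have "X \<subseteq> Y" if Y: "Y \<in> supp_sets U R" "Y \<subseteq> X" for Y
  proof
    fix y assume "y \<in> X"
    with assms(2) have "y \<in> U" by blast
    obtain a where "RN R y \<inter> X = {a}"
      using once \<open>y \<in> U\<close> by (auto simp: card_1_singleton_iff)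
    moreover have "y \<in> RN R y \<inter> X"
      using self_mem_RN[OF assms(1) \<open>y \<in> U\<close>] \<open>y \<in> X\<close> by blast
    ultimately have "RN R y \<inter> X = {y}" by simp
    moreover have "RN R y \<inter> Y \<noteq> {}"
      using Y(1) \<open>y \<in> U\<close> by (auto simp: mem_supp_sets_iff)
    ultimately show "y \<in> Y" using Y(2) by auto
  qed
  with supp show ?thesis
    unfolding minimal_supp_sets_def by blast
qed

lemma minimal_supp_sets_equiv:
  assumes "equiv U R"
  shows "minimal_supp_sets U R = {X. X \<subseteq> U \<and> (\<forall>x \<in> U. card (RN R x \<inter> X) = 1)}"
proof (intro set_eqI iffI)
  fix X assume X: "X \<in> minimal_supp_sets U R"
  then have "X \<subseteq> U"
    unfolding minimal_supp_sets_def by (simp add: mem_supp_sets_iff)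
  with X show "X \<in> {X. X \<subseteq> U \<and> (\<forall>x \<in> U. card (RN R x \<inter> X) = 1)}"
    using minimal_supp_sets_meet_RN_once[OF assms] by blast
next
  fix X assume "X \<in> {X. X \<subseteq> U \<and> (\<forall>x \<in> U. card (RN R x \<inter> X) = 1)}"
  then show "X \<in> minimal_supp_sets U R"
    using minimal_supp_setsI[OF assms] by blast
qed

theorem proposition5:
  fixes U :: "'a set" and R :: "('a \<times> 'a) set"
  assumes "finite U" and "U \<noteq> {}" and "equiv U R"
  shows "supp_bases U R = {X. X \<subseteq> U \<and> (\<forall>x \<in> U. card (RN R x \<inter> X) = 1)}"
  using minimal_supp_sets_equiv[OF assms(3)] by (simp only: supp_bases_eq_minimal_supp_sets)

end
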